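(* Let $G$ be a reaction network with one-dimensional stoichiometric subspace. If for a total-constant vector $c^*\in\mathbb R^{s-1}$ the index set $\mathcal H$ is empty, then for any rate-constant vector $\kappa\in\mathbb R^m_{>0}$, $G$ has either no positive steady states or infinitely many positive steady states in $\mathcal P_{c^*}$.
   Context: A reaction network $G$ has species $X_1,\dots,X_s$ and $m$ reactions $\sum_{i}\alpha_{ij}X_i\to\sum_i\beta_{ij}X_i$, $\alpha_{ij},\beta_{ij}\in\mathbb Z_{\ge0}$, $(\alpha_{1j},\dots,\alpha_{sj})\neq(\beta_{1j},\dots,\beta_{sj})$. $\mathcal N$ has entries $\beta_{ij}-\alpha_{ij}$, $S=\mathrm{im}\,\mathcal N$. For $\kappa\in\mathbb R^m_{>0}$, $f(\kappa;x)=\mathcal N(\kappa_1\prod_i x_i^{\alpha_{i1}},\dots,\kappa_m\prod_i x_i^{\alpha_{im}})^\top$. Since $S$ is one-dimensional, species are labelled so that $\beta_{11}-\alpha_{11}\ne0$. For $c\in\mathbb R^{s-1}$, $\mathcal P_c=\{x\in\mathbb R^s_{\ge0}:(\beta_{i1}-\alpha_{i1})x_1-(\beta_{11}-\alpha_{11})x_i=c_{i-1},\ i=2,\dots,s\}$. A positive steady state is $x\in\mathbb R^s_{>0}$ with $f(\kappa;x)=0$. Notation for $c^*$: $A_1=1,B_1=0$, $A_i=\frac{\beta_{i1}-\alpha_{i1}}{\beta_{11}-\alpha_{11}}$, $B_i=-\frac{c^*_{i-1}}{\beta_{11}-\alpha_{11}}$ ($i\ge2$). $[i]=\{k:A_k\ne0,B_k/A_k=B_i/A_i\}$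 if $A_i\ne0$, $[i]=\{k:A_k=0\}$ otherwise; species labelled so that $1,\dots,r$ represent the $r$ distinct classes. $\varphi_k=\min_{1\le j\le m}\sum_{i\in[k]}\alpha_{ij}$, $\gamma_{kj}=\sum_{i\in[k]}\alpha_{ij}-\varphi_k$. $\mathcal J=\{i:A_i\neq0\}$, $\mathcal H=\{k\in\{1,\dots,r\}\cap\mathcal J:\gamma_{k1},\dots,\gamma_{km}\text{ are not all the same}\}$. *)

theory Defs
  imports "HOL-Analysis.Analysis"
begin

text \<open>Species are indexed by 1..s, reactions by 1..m. alpha i j and beta i j are the
  stoichiometric coefficients of species i in reactant / product of reaction j.\<close>

definition stoich :: "(nat \<Rightarrow> nat \<Rightarrow> nat) \<Rightarrow> (nat \<Rightarrow> nat \<Rightarrow> nat) \<Rightarrow> nat \<Rightarrow> nat \<Rightarrow> real" where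
  "stoich \<alpha> \<beta> i j = real (\<beta> i j) - real (\<alpha> i j)"

definition reaction_network :: "nat \<Rightarrow> nat \<Rightarrow> (nat \<Rightarrow> nat \<Rightarrow> nat) \<Rightarrow> (nat \<Rightarrow> nat \<Rightarrow> nat) \<Rightarrow> bool" where
  "reaction_network s m \<alpha> \<beta> \<longleftrightarrow> 1 \<le> s \<and> 1 \<le> m \<and>
     (\<forall>j\<in>{1..m}. \<exists>i\<in>{1..s}. \<alpha> i j \<noteq> \<beta> i j)"

definition stoich_space :: "nat \<Rightarrow> nat \<Rightarrow> (nat \<Rightarrow> nat \<Rightarrow> nat) \<Rightarrow> (nat \<Rightarrow> nat \<Rightarrow> nat) \<Rightarrow> (nat \<Rightarrow> real) set" where
  "stoich_space s m \<alpha> \<beta> =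
     {x. \<exists>c :: nat \<Rightarrow> real. x = (\<lambda>i. if i \<in> {1..s} then (\<Sum>j=1..m. stoich \<alpha> \<beta> i j * c j) else 0)}"

definition one_dim_stoich :: "nat \<Rightarrow> nat \<Rightarrow> (nat \<Rightarrow> nat \<Rightarrow> nat) \<Rightarrow> (nat \<Rightarrow> nat \<Rightarrow> nat) \<Rightarrow> bool" where
  "one_dim_stoich s m \<alpha> \<beta> \<longleftrightarrow>
     (\<exists>v :: nat \<Rightarrow> real. v \<noteq> (\<lambda>_. 0) \<and> stoich_space s m \<alpha> \<beta> = {(\<lambda>i. t * v i) | t. True})"

definition mass_action :: "nat \<Rightarrow> nat \<Rightarrow> (nat \<Rightarrow> nat \<Rightarrow> nat) \<Rightarrow> (nat \<Rightarrow> nat \<Rightarrow> nat) \<Rightarrow>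
    (nat \<Rightarrow> real) \<Rightarrow> (nat \<Rightarrow> real) \<Rightarrow> nat \<Rightarrow> real" where
  "mass_action s m \<alpha> \<beta> \<kappa> x i =
     (\<Sum>j=1..m. stoich \<alpha> \<beta> i j * (\<kappa> j * (\<Prod>l=1..s. x l ^ \<alpha> l j)))"

text \<open>Stoichiometric compatibility class P_c (c indexed by 1..s-1); points of R^s are
  represented as functions vanishing outside 1..s.\<close>
definition compat_class :: "nat \<Rightarrow> (nat \<Rightarrow> nat \<Rightarrow> nat) \<Rightarrow> (nat \<Rightarrow> nat \<Rightarrow> nat) \<Rightarrow>
    (nat \<Rightarrow> real) \<Rightarrow> (nat \<Rightarrow> real) set" where
  "compat_class s \<alpha> \<beta> c =
     {x. (\<forall>i. i \<notin> {1..s} \<longrightarrow> x i = 0) \<and> (\<forall>i\<in>{1..s}. 0 \<le> x i) \<and>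
         (\<forall>i\<in>{2..s}. stoich \<alpha> \<beta> i 1 * x 1 - stoich \<alpha> \<beta> 1 1 * x i = c (i - 1))}"

definition pos_steady_states_in :: "nat \<Rightarrow> nat \<Rightarrow> (nat \<Rightarrow> nat \<Rightarrow> nat) \<Rightarrow> (nat \<Rightarrow> nat \<Rightarrow> nat) \<Rightarrow>
    (nat \<Rightarrow> real) \<Rightarrow> (nat \<Rightarrow> real) \<Rightarrow> (nat \<Rightarrow> real) set" where
  "pos_steady_states_in s m \<alpha> \<beta> \<kappa> c =
     {x \<in> compat_class s \<alpha> \<beta> c. (\<forall>i\<in>{1..s}. 0 < x i) \<and>
        (\<forall>i\<in>{1..s}. mass_action s m \<alpha> \<beta> \<kappa> x i = 0)}"

definition coefA :: "(nat \<Rightarrow> nat \<Rightarrow> nat) \<Rightarrow> (nat \<Rightarrow> nat \<Rightarrow> nat) \<Rightarrow> nat \<Rightarrow> real" where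
  "coefA \<alpha> \<beta> i = (if i = 1 then 1 else stoich \<alpha> \<beta> i 1 / stoich \<alpha> \<beta> 1 1)"

definition coefB :: "(nat \<Rightarrow> nat \<Rightarrow> nat) \<Rightarrow> (nat \<Rightarrow> nat \<Rightarrow> nat) \<Rightarrow> (nat \<Rightarrow> real) \<Rightarrow> nat \<Rightarrow> real" where
  "coefB \<alpha> \<beta> c i = (if i = 1 then 0 else - c (i - 1) / stoich \<alpha> \<beta> 1 1)"

definition species_class :: "nat \<Rightarrow> (nat \<Rightarrow> nat \<Rightarrow> nat) \<Rightarrow> (nat \<Rightarrow> nat \<Rightarrow> nat) \<Rightarrow> (nat \<Rightarrow> real) \<Rightarrow> nat \<Rightarrow> nat set" where
  "species_class s \<alpha> \<beta> c i =
     (if coefA \<alpha> \<beta> i \<noteq> 0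
      then {k\<in>{1..s}. coefA \<alpha> \<beta> k \<noteq> 0 \<and>
              coefB \<alpha> \<beta> c k / coefA \<alpha> \<beta> k = coefB \<alpha> \<beta> c i / coefA \<alpha> \<beta> i}
      else {k\<in>{1..s}. coefA \<alpha> \<beta> k = 0})"

definition phi :: "nat \<Rightarrow> nat \<Rightarrow> (nat \<Rightarrow> nat \<Rightarrow> nat) \<Rightarrow> (nat \<Rightarrow> nat \<Rightarrow> nat) \<Rightarrow> (nat \<Rightarrow> real) \<Rightarrow> nat \<Rightarrow> nat" where
  "phi s m \<alpha> \<beta> c k = Min ((\<lambda>j. \<Sum>i\<in>species_class s \<alpha> \<beta> c k. \<alpha> i j) ` {1..m})"

definition gamma :: "nat \<Rightarrow> nat \<Rightarrow> (nat \<Rightarrow> nat \<Rightarrow> nat) \<Rightarrow> (nat \<Rightarrow> nat \<Rightarrow> nat) \<Rightarrow> (nat \<Rightarrow> real) \<Rightarrow> nat \<Rightarrow> nat \<Rightarrow> nat" where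
  "gamma s m \<alpha> \<beta> c k j = (\<Sum>i\<in>species_class s \<alpha> \<beta> c k. \<alpha> i j) - phi s m \<alpha> \<beta> c k"

text \<open>The index set H, represented by the classes it indexes (each class [k], k in J, with
  non-constant gamma_{k1..km}); H is empty iff this set of classes is empty.\<close>
definition H_classes :: "nat \<Rightarrow> nat \<Rightarrow> (nat \<Rightarrow> nat \<Rightarrow> nat) \<Rightarrow> (nat \<Rightarrow> nat \<Rightarrow> nat) \<Rightarrow> (nat \<Rightarrow> real) \<Rightarrow> nat set set" where
  "H_classes s m \<alpha> \<beta> c =
     {species_class s \<alpha> \<beta> c k | k. k \<in> {1..s} \<and> coefA \<alpha> \<beta> k \<noteq> 0 \<and>
        \<not> (\<forall>j\<in>{1..m}. \<forall>j'\<in>{1..m}. gamma s m \<alpha> \<beta> c k j = gamma s m \<alpha> \<beta> c k j')}"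

end

theory Submission
  imports Defs
begin

text \<open>Take a positive steady state y in P_c* and let A be the direction of the line
  containing P_c*, so that y_i = A_i y_1 + B_i. For small t > 0 the point x = y + t A is again positive
  and in P_c*, and the ratio x_i / y_i = 1 + t / (y_1 + B_i / A_i) depends only on the class
  [i] (it is 1 when A_i = 0). Grouping the monomial of reaction j by classes, x^alpha_j / y^alpha_j
  is the product of these ratios raised to the powers phi_k + gamma_kj. When H is empty these
  powers do not depend on j, so f(kappa; x) is a scalar multiple of f(kappa; y) = 0.\<close>

lemma prod_power_eq_if_fibre_sums_eq:
  fixes f :: "'b \<Rightarrow> 'c::comm_monoid_mult" and g :: "'a \<Rightarrow> 'b"
  assumes "finite S"
    and "\<And>v. v \<in> g ` S \<Longrightarrow> f v \<noteq> 1 \<Longrightarrow>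
           (\<Sum>i\<in>{i\<in>S. g i = v}. e i) = (\<Sum>i\<in>{i\<in>S. g i = v}. e' i)"
  shows "(\<Prod>i\<in>S. f (g i) ^ e i) = (\<Prod>i\<in>S. f (g i) ^ e' i)"
proof -
  have grouped: "(\<Prod>i\<in>S. f (g i) ^ e i) = (\<Prod>v\<in>g ` S. f v ^ (\<Sum>i\<in>{i\<in>S. g i = v}. e i))"
    for e :: "'a \<Rightarrow> nat"
    by (subst prod.image_gen[OF \<open>finite S\<close>]) (auto simp: power_sum intro!: prod.cong)
  show ?thesis
    unfolding grouped by (rule prod.cong) (use assms(2) in \<open>fastforce+\<close>)
qed

lemma compat_class_shift:
  assumes "y \<in> compat_class s \<alpha> \<beta> c" and "stoich \<alpha> \<beta> 1 1 \<noteq> 0"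
    and "\<forall>i\<in>{1..s}. 0 \<le> y i + t * coefA \<alpha> \<beta> i"
  shows "(\<lambda>i. if i \<in> {1..s} then y i + t * coefA \<alpha> \<beta> i else 0) \<in> compat_class s \<alpha> \<beta> c"
  using assms unfolding compat_class_def by (auto simp: coefA_def field_simps)

lemma compat_class_coord:
  assumes "x \<in> compat_class s \<alpha> \<beta> c" and "stoich \<alpha> \<beta> 1 1 \<noteq> 0" and "i \<in> {1..s}"
  shows "x i = coefA \<alpha> \<beta> i * x 1 + coefB \<alpha> \<beta> c i"
proof (cases "i = 1")
  case False
  with assms have "stoich \<alpha> \<beta> i 1 * x 1 - stoich \<alpha> \<beta> 1 1 * x i = c (i - 1)"
    unfolding compat_class_def by auto
  with False \<open>stoich \<alpha> \<beta> 1 1 \<noteq> 0\<close> show ?thesis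
    by (simp add: coefA_def coefB_def field_simps)
qed (simp add: coefA_def coefB_def)

lemma species_class_eq_fibre:
  assumes "y \<in> compat_class s \<alpha> \<beta> c" and "stoich \<alpha> \<beta> 1 1 \<noteq> 0"
    and pos: "\<forall>i\<in>{1..s}. 0 < y i"
    and "k \<in> {1..s}" and "coefA \<alpha> \<beta> k \<noteq> 0"
  shows "species_class s \<alpha> \<beta> c k = {i\<in>{1..s}. coefA \<alpha> \<beta> i / y i = coefA \<alpha> \<beta> k / y k}"
proof -
  let ?A = "coefA \<alpha> \<beta>" and ?B = "coefB \<alpha> \<beta> c"
  have "0 < y k"
    using pos assms(4) by blast
  have ratio_iff: "?A i / y i = ?A k / y k \<longleftrightarrow> ?A i \<noteq> 0 \<and> ?B i / ?A i = ?B k / ?A k"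
    if "i \<in> {1..s}" for i
  proof (cases "?A i = 0")
    case False
    have inverse_ratio: "y l / ?A l = y 1 + ?B l / ?A l" if "l \<in> {1..s}" "?A l \<noteq> 0" for l
      using compat_class_coord[OF assms(1,2) that(1)] that(2) by (simp add: field_simps)
    have "?A i / y i = ?A k / y k \<longleftrightarrow> y i / ?A i = y k / ?A k"
      by (metis inverse_divide inverse_eq_iff_eq)
    with False inverse_ratio \<open>i \<in> {1..s}\<close> assms(4,5) show ?thesis by simp
  qed (use \<open>0 < y k\<close> assms(5) in auto)
  show ?thesis
    using assms(5) ratio_iff unfolding species_class_def by auto
qed

lemma class_exponent_sums_eq:
  assumes "H_classes s m \<alpha> \<beta> c = {}"
    and "k \<in> {1..s}" and "coefA \<alpha> \<beta> k \<noteq> 0" and "j \<in> {1..m}" and "j' \<in> {1..m}"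
  shows "(\<Sum>i\<in>species_class s \<alpha> \<beta> c k. \<alpha> i j) = (\<Sum>i\<in>species_class s \<alpha> \<beta> c k. \<alpha> i j')"
proof -
  have "gamma s m \<alpha> \<beta> c k j = gamma s m \<alpha> \<beta> c k j'"
    using assms unfolding H_classes_def by blast
  moreover have phi_le: "phi s m \<alpha> \<beta> c k \<le> (\<Sum>i\<in>species_class s \<alpha> \<beta> c k. \<alpha> i l)"
    if "l \<in> {1..m}" for l
    unfolding phi_def using that by (intro Min_le) auto
  ultimately show ?thesis
    using phi_le[OF assms(4)] phi_le[OF assms(5)] unfolding gamma_def by linarith
qed

lemma mass_action_scale:
  assumes "\<And>j. j \<in> {1..m} \<Longrightarrow> (\<Prod>l=1..s. x l ^ \<alpha> l j) = q * (\<Prod>l=1..s. y l ^ \<alpha> l j)"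
  shows "mass_action s m \<alpha> \<beta> \<kappa> x i = q * mass_action s m \<alpha> \<beta> \<kappa> y i"
  unfolding mass_action_def sum_distrib_left
proof (rule sum.cong[OF refl])
  fix j assume "j \<in> {1..m}"
  then show "stoich \<alpha> \<beta> i j * (\<kappa> j * (\<Prod>l=1..s. x l ^ \<alpha> l j))
               = q * (stoich \<alpha> \<beta> i j * (\<kappa> j * (\<Prod>l=1..s. y l ^ \<alpha> l j)))"
    by (simp only: assms mult_ac)
qed

lemma monomial_ratio_indep_of_reaction:
  assumes "H_classes s m \<alpha> \<beta> c = {}" and "stoich \<alpha> \<beta> 1 1 \<noteq> 0"
    and "y \<in> compat_class s \<alpha> \<beta> c" and pos: "\<forall>i\<in>{1..s}. 0 < y i"
    and "0 < t" and "j \<in> {1..m}"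
  defines "r \<equiv> \<lambda>l. 1 + t * (coefA \<alpha> \<beta> l / y l)"
  shows "(\<Prod>l=1..s. (y l + t * coefA \<alpha> \<beta> l) ^ \<alpha> l j)
           = (\<Prod>l=1..s. r l ^ \<alpha> l 1) * (\<Prod>l=1..s. y l ^ \<alpha> l j)"
proof -
  let ?\<rho> = "\<lambda>l. coefA \<alpha> \<beta> l / y l"
  have "(\<Prod>l=1..s. r l ^ \<alpha> l j) = (\<Prod>l=1..s. r l ^ \<alpha> l 1)"
    unfolding r_def
  proof (rule prod_power_eq_if_fibre_sums_eq[where g = ?\<rho>])
    fix v assume "v \<in> ?\<rho> ` {1..s}" and "1 + t * v \<noteq> 1"
    then obtain k where k: "k \<in> {1..s}" "v = ?\<rho> k" "coefA \<alpha> \<beta> k \<noteq> 0" by auto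
    then show "(\<Sum>i\<in>{i\<in>{1..s}. ?\<rho> i = v}. \<alpha> i j) = (\<Sum>i\<in>{i\<in>{1..s}. ?\<rho> i = v}. \<alpha> i 1)"
      using species_class_eq_fibre[OF assms(3,2) pos k(1,3)]
        class_exponent_sums_eq[OF assms(1) k(1,3) \<open>j \<in> {1..m}\<close>, of 1] \<open>j \<in> {1..m}\<close>
      by simp
  qed simp
  moreover have "(\<Prod>l=1..s. (y l + t * coefA \<alpha> \<beta> l) ^ \<alpha> l j)
                   = (\<Prod>l=1..s. r l ^ \<alpha> l j) * (\<Prod>l=1..s. y l ^ \<alpha> l j)"
  proof -
    have "y l + t * coefA \<alpha> \<beta> l = r l * y l" if "l \<in> {1..s}" for l
    proof -
      have "0 < y l" using pos that by blast
      then show ?thesis by (simp add: r_def field_simps)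
    qed
    then have "(\<Prod>l=1..s. (y l + t * coefA \<alpha> \<beta> l) ^ \<alpha> l j) = (\<Prod>l=1..s. (r l * y l) ^ \<alpha> l j)"
      by (intro prod.cong) simp_all
    then show ?thesis
      by (simp add: power_mult_distrib prod.distrib)
  qed
  ultimately show ?thesis by simp
qed

lemma pos_steady_state_shift:
  assumes "H_classes s m \<alpha> \<beta> c = {}" and "stoich \<alpha> \<beta> 1 1 \<noteq> 0"
    and y: "y \<in> pos_steady_states_in s m \<alpha> \<beta> \<kappa> c"
    and "0 < t" and shift_pos: "\<forall>i\<in>{1..s}. 0 < y i + t * coefA \<alpha> \<beta> i"
  shows "(\<lambda>i. if i \<in> {1..s} then y i + t * coefA \<alpha> \<beta> i else 0) \<in> pos_steady_states_in s m \<alpha> \<beta> \<kappa> c"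
    (is "?x \<in> _")
proof -
  have y_class: "y \<in> compat_class s \<alpha> \<beta> c" and y_pos: "\<forall>i\<in>{1..s}. 0 < y i"
    and y_steady: "\<forall>i\<in>{1..s}. mass_action s m \<alpha> \<beta> \<kappa> y i = 0"
    using y unfolding pos_steady_states_in_def by auto
  have "?x \<in> compat_class s \<alpha> \<beta> c"
    using shift_pos by (intro compat_class_shift[OF y_class assms(2)]) (simp add: less_imp_le)
  moreover have "mass_action s m \<alpha> \<beta> \<kappa> ?x i = 0" if "i \<in> {1..s}" for i
  proof -
    have "(\<Prod>l=1..s. ?x l ^ \<alpha> l j) = (\<Prod>l=1..s. (y l + t * coefA \<alpha> \<beta> l) ^ \<alpha> l j)" for j
      by (rule prod.cong) auto
    then have "mass_action s m \<alpha> \<beta> \<kappa> ?x i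
            = (\<Prod>l=1..s. (1 + t * (coefA \<alpha> \<beta> l / y l)) ^ \<alpha> l 1) * mass_action s m \<alpha> \<beta> \<kappa> y i"
      using monomial_ratio_indep_of_reaction[OF assms(1,2) y_class y_pos \<open>0 < t\<close>]
      by (intro mass_action_scale) simp
    with y_steady that show ?thesis by simp
  qed
  ultimately show ?thesis
    using shift_pos unfolding pos_steady_states_in_def by simp
qed

lemma eventually_pos_perturbation:
  fixes y a :: "'a \<Rightarrow> real"
  assumes "finite I" and "\<forall>i\<in>I. 0 < y i"
  shows "\<forall>\<^sub>F t in at_right 0. \<forall>i\<in>I. 0 < y i + t * a i"
proof (rule eventually_ball_finite[OF \<open>finite I\<close>], intro ballI)
  fix i assume "i \<in> I"
  have "((\<lambda>t. y i + t * a i) \<longlongrightarrow> y i + 0 * a i) (at_right 0)"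
    by (intro tendsto_intros)
  with assms(2) \<open>i \<in> I\<close> show "\<forall>\<^sub>F t in at_right 0. 0 < y i + t * a i"
    by (auto simp: order_tendsto_iff)
qed

lemma infinite_pos_steady_states:
  assumes "1 \<le> s" and "stoich \<alpha> \<beta> 1 1 \<noteq> 0" and "H_classes s m \<alpha> \<beta> c = {}"
    and y: "y \<in> pos_steady_states_in s m \<alpha> \<beta> \<kappa> c"
  shows "infinite (pos_steady_states_in s m \<alpha> \<beta> \<kappa> c)"
proof -
  let ?P = "pos_steady_states_in s m \<alpha> \<beta> \<kappa> c"
  define x where "x t = (\<lambda>i. if i \<in> {1..s} then y i + t * coefA \<alpha> \<beta> i else 0)" for t
  have "\<forall>\<^sub>F t in at_right 0. \<forall>i\<in>{1..s}. 0 < y i + t * coefA \<alpha> \<beta> i"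
    using y by (intro eventually_pos_perturbation) (auto simp: pos_steady_states_in_def)
  then obtain b :: real where "0 < b" and b: "\<And>t. 0 < t \<Longrightarrow> t < b \<Longrightarrow> x t \<in> ?P"
    unfolding eventually_at_right_field x_def
    using pos_steady_state_shift[OF assms(3,2) y] by auto
  have "inj_on x {0<..<b}"
  proof (rule inj_onI)
    fix t t' assume "x t = x t'"
    then have "x t 1 = x t' 1" by simp
    with \<open>1 \<le> s\<close> show "t = t'" by (simp add: x_def coefA_def)
  qed
  with \<open>0 < b\<close> have "infinite (x ` {0<..<b})"
    by (simp add: finite_image_iff)
  moreover have "x ` {0<..<b} \<subseteq> ?P"
    using b by auto
  ultimately show ?thesis
    by (metis infinite_super)
qed

theorem lemma5p10:
  fixes s m :: nat and \<alpha> \<beta> :: "nat \<Rightarrow> nat \<Rightarrow> nat" and cstar :: "nat \<Rightarrow> real"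
  assumes "reaction_network s m \<alpha> \<beta>"
    and "one_dim_stoich s m \<alpha> \<beta>"
    and "stoich \<alpha> \<beta> 1 1 \<noteq> 0"
    and "H_classes s m \<alpha> \<beta> cstar = {}"
  shows "\<forall>\<kappa> :: nat \<Rightarrow> real. (\<forall>j\<in>{1..m}. 0 < \<kappa> j) \<longrightarrow>
           (pos_steady_states_in s m \<alpha> \<beta> \<kappa> cstar = {} \<or>
            infinite (pos_steady_states_in s m \<alpha> \<beta> \<kappa> cstar))"
proof (intro allI impI)
  fix \<kappa> :: "nat \<Rightarrow> real"
  have "1 \<le> s"
    using assms(1) unfolding reaction_network_def by simp
  then show "pos_steady_states_in s m \<alpha> \<beta> \<kappa> cstar = {} \<or>
             infinite (pos_steady_states_in s m \<alpha> \<beta> \<kappa> cstar)"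
    using infinite_pos_steady_states[OF _ assms(3,4)] by blast
qed

end
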